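(* Let $\Pi$ be a non-negative projector on $\mathcal{Q}^n$ of rank $q$. Then there exist non-negative states $|\psi_1\rangle,\ldots,|\psi_q\rangle$ such that $\langle\psi_a|\psi_b\rangle=\delta_{a,b}$ for all $a,b$ and $\Pi=\sum_{a=1}^q|\psi_a\rangle\langle\psi_a|$.
   Context: $\mathcal{Q}^n=(\mathbb{C}^2)^{\otimes n}$ with standard basis $\{|x\rangle\}$, $x\in\{0,1\}^n$. A non-negative projector is a Hermitian projector on $\mathcal{Q}^n$ whose matrix in the standard basis has only real non-negative entries. A non-negative state is a normalized vector in $\mathcal{Q}^n$ all of whose amplitudes in the standard basis are real and non-negative. *)

theory Defs
  imports Complex_Main "Jordan_Normal_Form.DL_Rank" "Jordan_Normal_Form.Schur_Decomposition"
begin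

(* Q^n = (C^2)^{\<otimes> n} is represented as complex vectors of dimension 2^n; the standard
   basis vector |x>, x \<in> {0,1}^n, is the unit vector with index (binary value of x) < 2^n. *)

definition nonneg_entry :: "complex \<Rightarrow> bool" where
  "nonneg_entry z \<longleftrightarrow> z \<in> \<real> \<and> Re z \<ge> 0"

definition nonneg_projector :: "nat \<Rightarrow> complex mat \<Rightarrow> bool" where
  "nonneg_projector n P \<longleftrightarrow> P \<in> carrier_mat (2^n) (2^n) \<and> mat_adjoint P = P \<and> P * P = P
     \<and> (\<forall>i<2^n. \<forall>j<2^n. nonneg_entry (P $$ (i,j)))"

definition braket :: "complex vec \<Rightarrow> complex vec \<Rightarrow> complex" where
  "braket v w = (\<Sum>i<dim_vec v. cnj (v $ i) * w $ i)"

definition nonneg_state :: "nat \<Rightarrow> complex vec \<Rightarrow> bool" where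
  "nonneg_state n v \<longleftrightarrow> v \<in> carrier_vec (2^n) \<and> braket v v = 1
     \<and> (\<forall>i<2^n. nonneg_entry (v $ i))"

definition ketbra :: "complex vec \<Rightarrow> complex mat" where
  "ketbra v = mat (dim_vec v) (dim_vec v) (\<lambda>(i,j). v $ i * cnj (v $ j))"

(* \<Sum>_{a<q} |\<psi>_a><\<psi>_a| as a 2^n \<times> 2^n matrix (matrices do not form a comm_monoid_add
   type in Jordan_Normal_Form, so the sum is written entrywise) *)
definition sum_ketbra :: "nat \<Rightarrow> nat \<Rightarrow> (nat \<Rightarrow> complex vec) \<Rightarrow> complex mat" where
  "sum_ketbra n q \<psi> = mat (2^n) (2^n) (\<lambda>(i,j). \<Sum>a<q. ketbra (\<psi> a) $$ (i,j))"

end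

theory Submission
  imports Defs
begin

text \<open>The entries \<open>p\<close> of \<open>\<Pi>\<close> form a real symmetric idempotent matrix with
  non-negative entries. Non-negativity and \<open>p = p\<^sup>2\<close> make \<open>0 < p\<^sub>i\<^sub>j\<close> an equivalence
  relation on the support \<open>{i. 0 < p\<^sub>i\<^sub>i}\<close>, and on each class \<open>p\<close> has rank one. Hence
  \<open>p\<^sub>i\<^sub>j = \<Sum>\<^sub>r p\<^sub>i\<^sub>r p\<^sub>j\<^sub>r / p\<^sub>r\<^sub>r\<close>, summed over one representative \<open>r\<close> per class, and the
  normalized representative columns \<open>p\<^sub>\<bullet>\<^sub>r / \<surd>p\<^sub>r\<^sub>r\<close> are non-negative, orthonormal, and
  span the column space of \<open>\<Pi>\<close>.\<close>

lemma (in vec_space) rank_eq_card_spanning_indpt: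
  assumes A: "A \<in> carrier_mat n nc" and S: "S \<subseteq> set (cols A)" "lin_indpt S"
    and spans: "set (cols A) \<subseteq> span S"
  shows "rank A = card S"
proof (rule rank_card_indpt[OF A])
  have Scar: "S \<subseteq> carrier_vec n" using S(1) A cols_dim by blast
  show "maximal S (\<lambda>T. T \<subseteq> set (cols A) \<and> lin_indpt T)"
    unfolding maximal_def
  proof (intro conjI allI impI S)
    fix B assume B: "S \<subseteq> B \<and> B \<subseteq> set (cols A) \<and> lin_indpt B"
    show "B = S"
    proof (rule ccontr)
      assume "B \<noteq> S"
      then obtain v where v: "v \<in> B" "v \<notin> S" using B by blast
      have vcar: "v \<in> carrier_vec n" using v(1) B A cols_dim by blast
      have "lin_dep (S \<union> {v})"
        using lin_dep_iff_in_span[OF Scar S(2) _ v(2)] v(1) B spans vcar by auto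
      then have "lin_dep B" by (rule supset_ld_is_ld) (use v B in auto)
      then show False using B by blast
    qed
  qed
qed

lemma (in vec_space) lin_indpt_diagonal_cols:
  assumes A: "A \<in> carrier_mat n n" and R: "R \<subseteq> {..<n}"
    and diag: "\<And>r. r \<in> R \<Longrightarrow> A $$ (r,r) \<noteq> 0"
    and off: "\<And>r s. r \<in> R \<Longrightarrow> s \<in> R \<Longrightarrow> r \<noteq> s \<Longrightarrow> A $$ (r,s) = 0"
  shows "lin_indpt (col A ` R)" and "inj_on (col A) R"
proof -
  have finR: "finite R" using R finite_subset by blast
  have colr: "col A s $ r = A $$ (r,s)" if "r \<in> R" "s \<in> R" for r s
  proof -
    have "r < n" "s < n" using that R by auto
    then show ?thesis using A by simp
  qed
  show inj: "inj_on (col A) R"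
  proof (rule inj_onI, rule ccontr)
    fix r s assume rs: "r \<in> R" "s \<in> R" "col A r = col A s" "r \<noteq> s"
    then have "col A r $ r = 0" using colr off by metis
    then show False using colr diag rs(1) by metis
  qed
  have car: "col A ` R \<subseteq> carrier_vec n" using A by auto
  show "lin_indpt (col A ` R)"
  proof (rule finite_lin_indpt2)
    fix a assume lc: "lincomb a (col A ` R) = 0\<^sub>v n"
    show "\<forall>v \<in> col A ` R. a v = 0"
    proof
      fix v assume v: "v \<in> col A ` R"
      then obtain r where r: "r \<in> R" "v = col A r" by blast
      have rn: "r < n" using r R by auto
      have "0 = lincomb a (col A ` R) $ r" using lc rn by simp
      also have "\<dots> = (\<Sum>x \<in> col A ` R. a x * x $ r)" by (rule lincomb_index[OF rn car])
      also have "\<dots> = a v * v $ r"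
      proof (rule sum.remove[OF _ v, THEN trans], simp add: finR)
        have "x $ r = 0" if "x \<in> col A ` R - {v}" for x
          using that r off colr by fastforce
        then show "a v * v $ r + (\<Sum>x \<in> col A ` R - {v}. a x * x $ r) = a v * v $ r" by simp
      qed
      finally show "a v = 0" using diag r colr by simp
    qed
  qed (use finR car in auto)
qed

locale nonneg_projection =
  fixes p :: "nat \<Rightarrow> nat \<Rightarrow> real" and N :: nat
  assumes nonneg: "0 \<le> p i j"
    and symmetric: "p i j = p j i"
    and idempotent: "p i j = (\<Sum>k<N. p i k * p k j)"
    and vanishes_outside: "N \<le> i \<Longrightarrow> p i j = 0"
begin

lemma pos_entry_indices_less: "0 < p i j \<Longrightarrow> i < N \<and> j < N"
  using vanishes_outside symmetric by (metis less_irrefl not_le)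

lemma idempotent_cols: "(\<Sum>k<N. p k i * p k j) = p i j"
proof -
  have "(\<Sum>k<N. p k i * p k j) = (\<Sum>k<N. p i k * p k j)"
    by (rule sum.cong[OF refl]) (metis symmetric)
  then show ?thesis by (simp add: idempotent[of i j, symmetric])
qed

lemma entry_square_le_diag: "(p i j)\<^sup>2 \<le> p i i"
proof (cases "j < N")
  case True
  have "(p i j)\<^sup>2 \<le> (\<Sum>k<N. (p i k)\<^sup>2)"
    using True by (intro member_le_sum) auto
  also have "\<dots> = p i i"
    by (subst idempotent[of i i]) (simp add: power2_eq_square symmetric[of i])
  finally show ?thesis .
next
  case False
  then show ?thesis using vanishes_outside[of j i] symmetric[of i j] nonneg[of i i] by simp
qed

lemma entry_eq_0_if_diag_not_pos: "\<not> 0 < p j j \<Longrightarrow> p i j = 0"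
  using entry_square_le_diag[of j i] nonneg[of j j] symmetric[of i j] by simp

lemma pos_entry_trans:
  assumes "0 < p i j" "0 < p j k"
  shows "0 < p i k"
proof -
  have "0 < p i j * p j k" using assms by simp
  also have "\<dots> \<le> (\<Sum>l<N. p i l * p l k)"
    using pos_entry_indices_less assms(1) by (intro member_le_sum) (auto simp: nonneg)
  finally show ?thesis by (simp add: idempotent[symmetric])
qed

text \<open>For a symmetric idempotent \<open>p\<close> and \<open>z = p y\<close> one has \<open>\<langle>z, z - y\<rangle> = 0\<close>; if moreover
  \<open>0 \<le> y \<le> z\<close> entrywise, every summand vanishes.\<close>

lemma subinvariant_vanishes_at_neighbour:
  assumes y_nonneg: "\<And>k. 0 \<le> y k"
    and subinvariant: "\<And>k. y k \<le> (\<Sum>l<N. p k l * y l)"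
    and "y r = 0" and "0 < p r j"
  shows "y j = 0"
proof -
  define z where "z k = (\<Sum>l<N. p k l * y l)" for k
  have "(\<Sum>k<N. z k * z k) = (\<Sum>k<N. \<Sum>l<N. \<Sum>m<N. y l * y m * (p k l * p k m))"
    unfolding z_def sum_product by (simp add: mult_ac)
  also have "\<dots> = (\<Sum>l<N. \<Sum>m<N. y l * y m * (\<Sum>k<N. p k l * p k m))"
    unfolding sum_distrib_left by (subst sum.swap) (rule sum.cong[OF refl], rule sum.swap)
  also have "\<dots> = (\<Sum>k<N. y k * z k)"
    unfolding z_def by (simp add: idempotent_cols sum_distrib_left mult_ac)
  finally have "(\<Sum>k<N. z k * (z k - y k)) = 0"
    by (simp add: algebra_simps sum_subtractf)
  moreover have "0 \<le> z k * (z k - y k)" for k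
    using y_nonneg[of k] subinvariant[of k] unfolding z_def by simp
  ultimately have "z r * (z r - y r) = 0"
    using pos_entry_indices_less[OF assms(4)] by (simp add: sum_nonneg_eq_0_iff)
  then have "(\<Sum>l<N. p r l * y l) = 0" using assms(3) unfolding z_def by simp
  then have "p r j * y j = 0"
    using pos_entry_indices_less[OF assms(4)] y_nonneg nonneg by (simp add: sum_nonneg_eq_0_iff)
  then show ?thesis using assms(4) by simp
qed

text \<open>Within a connected block \<open>p\<close> has rank one: \<open>w = p\<^sub>r\<^sub>r p\<^sub>\<bullet>\<^sub>i - p\<^sub>r\<^sub>i p\<^sub>\<bullet>\<^sub>r\<close> is
  fixed by \<open>p\<close> and vanishes at \<open>r\<close>, so \<open>|w|\<close> is subinvariant and vanishes next to \<open>r\<close>.\<close>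

lemma pos_entry_rank_one:
  assumes "0 < p r j"
  shows "p j i * p r r = p r i * p j r"
proof -
  define w where "w k = p r r * p k i - p r i * p k r" for k
  have fixed: "(\<Sum>l<N. p k l * w l) = w k" for k
  proof -
    have "(\<Sum>l<N. p k l * w l) = p r r * (\<Sum>l<N. p k l * p l i) - p r i * (\<Sum>l<N. p k l * p l r)"
      unfolding w_def by (simp add: sum_distrib_left sum_subtractf algebra_simps)
    then show ?thesis unfolding w_def by (simp add: idempotent[symmetric])
  qed
  have "\<bar>w j\<bar> = 0"
  proof (rule subinvariant_vanishes_at_neighbour[where y = "\<lambda>k. \<bar>w k\<bar>"])
    show "\<bar>w k\<bar> \<le> (\<Sum>l<N. p k l * \<bar>w l\<bar>)" for k
      using sum_abs[of "\<lambda>l. p k l * w l" "{..<N}"]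
      by (simp add: fixed abs_mult nonneg)
    show "\<bar>w r\<bar> = 0" unfolding w_def by (simp add: symmetric[of r i])
  qed (use assms in auto)
  then show ?thesis unfolding w_def by (simp add: symmetric[of r j] mult.commute)
qed

definition rep :: "nat \<Rightarrow> nat" where
  "rep i = (LEAST j. 0 < p i j)"

definition reps :: "nat set" where
  "reps = {r. 0 < p r r \<and> rep r = r}"

lemma pos_entry_rep: "0 < p i i \<Longrightarrow> 0 < p i (rep i)"
  unfolding rep_def by (rule LeastI)

lemma rep_eq_if_pos_entry:
  assumes "0 < p i j"
  shows "rep i = rep j"
proof -
  have "0 < p j i" using assms symmetric by simp
  then have "(\<lambda>k. 0 < p i k) = (\<lambda>k. 0 < p j k)"
    using assms pos_entry_trans by blast
  then show ?thesis unfolding rep_def by simp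
qed

lemma reps_subset: "reps \<subseteq> {..<N}"
  unfolding reps_def using pos_entry_indices_less by auto

lemma finite_reps: "finite reps"
  using reps_subset finite_subset by blast

lemma rep_in_reps:
  assumes "0 < p i i"
  shows "rep i \<in> reps"
proof -
  have pos: "0 < p i (rep i)" using pos_entry_rep assms .
  then have "0 < p (rep i) (rep i)"
    using pos_entry_trans symmetric by metis
  moreover have "rep (rep i) = rep i" using rep_eq_if_pos_entry[OF pos] by simp
  ultimately show ?thesis unfolding reps_def by simp
qed

lemma entry_eq_0_if_reps_differ:
  assumes "r \<in> reps" "rep i \<noteq> r"
  shows "p i r = 0"
proof (rule ccontr)
  assume "p i r \<noteq> 0"
  then have "rep i = rep r" using nonneg[of i r] by (intro rep_eq_if_pos_entry) simp
  then show False using assms unfolding reps_def by simp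
qed

lemma entry_via_rep:
  assumes "0 < p j j"
  shows "p i j = p i (rep j) * p j (rep j) / p (rep j) (rep j)"
proof -
  define r where "r = rep j"
  have "0 < p r j" using pos_entry_rep[OF assms] symmetric unfolding r_def by metis
  then have "p j i * p r r = p r i * p j r" by (rule pos_entry_rank_one)
  moreover have "0 < p r r" using rep_in_reps[OF assms] unfolding reps_def r_def by simp
  ultimately have "p j i = p r i * p j r / p r r" by (simp add: field_simps)
  then show ?thesis unfolding r_def by (metis symmetric)
qed

lemma entry_eq_sum_reps: "p i j = (\<Sum>r\<in>reps. p i r * p j r / p r r)"
proof (cases "0 < p j j")
  case True
  have "(\<Sum>r\<in>reps. p i r * p j r / p r r) = p i (rep j) * p j (rep j) / p (rep j) (rep j)"
    using entry_eq_0_if_reps_differ[of _ j] rep_in_reps[OF True] finite_reps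
    by (subst sum.mono_neutral_right[of reps "{rep j}"]) auto
  then show ?thesis using entry_via_rep[OF True] by simp
next
  case False
  have "p i r * p j r / p r r = 0" for r
    using entry_eq_0_if_diag_not_pos[OF False, of r] symmetric[of j r] by simp
  then show ?thesis using entry_eq_0_if_diag_not_pos[OF False] by simp
qed

definition rep_state :: "nat \<Rightarrow> complex vec" where
  "rep_state r = vec N (\<lambda>i. complex_of_real (p i r / sqrt (p r r)))"

lemma rep_state_carrier: "rep_state r \<in> carrier_vec N"
  unfolding rep_state_def by simp

lemma rep_state_nonneg: "i < N \<Longrightarrow> nonneg_entry (rep_state r $ i)"
  unfolding rep_state_def nonneg_entry_def by (simp add: nonneg)

lemma braket_rep_state:
  assumes "r \<in> reps" "s \<in> reps"
  shows "braket (rep_state r) (rep_state s) = (if r = s then 1 else 0)"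
proof -
  have "braket (rep_state r) (rep_state s)
      = complex_of_real (\<Sum>i<N. p i r * p i s / (sqrt (p r r) * sqrt (p s s)))"
    unfolding braket_def rep_state_def by simp
  also have "\<dots> = complex_of_real (p r s / (sqrt (p r r) * sqrt (p s s)))"
    by (simp add: sum_divide_distrib[symmetric] idempotent_cols)
  also have "\<dots> = (if r = s then 1 else 0)"
    using assms entry_eq_0_if_reps_differ[of s r] unfolding reps_def by (auto simp flip: of_real_mult)
  finally show ?thesis .
qed

lemma ketbra_rep_state:
  assumes "r \<in> reps" "i < N" "j < N"
  shows "ketbra (rep_state r) $$ (i,j) = complex_of_real (p i r * p j r / p r r)"
proof -
  have "sqrt (p r r) * sqrt (p r r) = p r r" using assms(1) unfolding reps_def by simp
  then show ?thesis
    unfolding ketbra_def rep_state_def using assms(2,3)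
    by (simp add: of_real_mult[symmetric] del: of_real_mult)
qed

lemma orthonormal_decomposition:
  "\<exists>\<psi>. (\<forall>a<card reps. \<psi> a \<in> carrier_vec N \<and> (\<forall>i<N. nonneg_entry (\<psi> a $ i)))
     \<and> (\<forall>a<card reps. \<forall>b<card reps. braket (\<psi> a) (\<psi> b) = (if a = b then 1 else 0))
     \<and> (\<forall>i<N. \<forall>j<N. (\<Sum>a<card reps. ketbra (\<psi> a) $$ (i,j)) = complex_of_real (p i j))"
proof -
  obtain h where h: "bij_betw h {..<card reps} reps"
    using ex_bij_betw_nat_finite[OF finite_reps] by (auto simp: atLeast0LessThan)
  have h_reps: "a < card reps \<Longrightarrow> h a \<in> reps" for a using h bij_betwE by blast
  have h_inj: "a < card reps \<Longrightarrow> b < card reps \<Longrightarrow> h a = h b \<Longrightarrow> a = b" for a b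
    using h unfolding bij_betw_def inj_on_def by blast
  have "(\<Sum>a<card reps. ketbra (rep_state (h a)) $$ (i,j)) = complex_of_real (p i j)"
    if "i < N" "j < N" for i j
  proof -
    have "(\<Sum>a<card reps. ketbra (rep_state (h a)) $$ (i,j))
        = (\<Sum>a<card reps. complex_of_real (p i (h a) * p j (h a) / p (h a) (h a)))"
      using h_reps ketbra_rep_state that by simp
    also have "\<dots> = complex_of_real (\<Sum>a<card reps. p i (h a) * p j (h a) / p (h a) (h a))"
      by (simp only: of_real_sum)
    also have "\<dots> = complex_of_real (\<Sum>r\<in>reps. p i r * p j r / p r r)"
      using sum.reindex_bij_betw[OF h, of "\<lambda>r. p i r * p j r / p r r"] by (simp only:)
    finally show ?thesis by (simp add: entry_eq_sum_reps[symmetric])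
  qed
  then show ?thesis
    using rep_state_carrier rep_state_nonneg braket_rep_state h_reps h_inj
    by (intro exI[of _ "rep_state \<circ> h"]) auto
qed

lemma rank_eq_card_reps:
  assumes P: "P \<in> carrier_mat N N"
    and entries: "\<And>i j. i < N \<Longrightarrow> j < N \<Longrightarrow> P $$ (i,j) = complex_of_real (p i j)"
  shows "vec_space.rank N P = card reps"
proof -
  have diag: "P $$ (r,r) \<noteq> 0" if "r \<in> reps" for r
    using that reps_subset entries unfolding reps_def by auto
  have off: "P $$ (r,s) = 0" if "r \<in> reps" "s \<in> reps" "r \<noteq> s" for r s
    using that subsetD[OF reps_subset] entries entry_eq_0_if_reps_differ[of s r] symmetric[of r s]
    unfolding reps_def by auto
  interpret V: vec_space "TYPE(complex)" N .
  note indpt = V.lin_indpt_diagonal_cols[OF P reps_subset diag off]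
  have W: "col P ` reps \<subseteq> carrier_vec N" using P by auto
  have col_in_span: "col P j \<in> V.span (col P ` reps)" if "j < N" for j
  proof (cases "0 < p j j")
    case True
    let ?c = "complex_of_real (p j (rep j) / p (rep j) (rep j))"
    have "col P j = ?c \<cdot>\<^sub>v col P (rep j)"
      using P entries that rep_in_reps[OF True] reps_subset entry_via_rep[OF True]
      by (intro eq_vecI) (auto simp: field_simps)
    moreover have "col P (rep j) \<in> V.span (col P ` reps)"
      using rep_in_reps[OF True] W by (intro V.span_mem) auto
    ultimately show ?thesis using V.smult_in_span[OF W] by simp
  next
    case False
    have "col P j = V.lincomb (\<lambda>_. 0) {}"
      using P entries that entry_eq_0_if_diag_not_pos[OF False]
      by (intro eq_vecI) (auto simp: V.lincomb_def)
    then show ?thesis by (rule V.in_spanI) auto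
  qed
  have "V.rank P = card (col P ` reps)"
  proof (rule V.rank_eq_card_spanning_indpt[OF P _ indpt(1)])
    show "col P ` reps \<subseteq> set (cols P)" using P reps_subset by (auto simp: cols_def)
    show "set (cols P) \<subseteq> V.span (col P ` reps)"
      using P col_in_span by (auto simp: cols_def)
  qed
  then show ?thesis using card_image[OF indpt(2)] by simp
qed

end

definition Re_entries :: "nat \<Rightarrow> complex mat \<Rightarrow> nat \<Rightarrow> nat \<Rightarrow> real" where
  "Re_entries N P i j = (if i < N \<and> j < N then Re (P $$ (i,j)) else 0)"

lemma nonneg_projector_entries:
  assumes "nonneg_projector n P" "i < 2^n" "j < 2^n"
  shows "P $$ (i,j) = complex_of_real (Re_entries (2^n) P i j)"
  using assms unfolding nonneg_projector_def nonneg_entry_def Re_entries_def by simp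

lemma nonneg_projection_Re_entries:
  assumes P: "nonneg_projector n P"
  shows "nonneg_projection (Re_entries (2^n) P) (2^n)"
proof
  let ?p = "Re_entries (2^n) P"
  have carrier: "P \<in> carrier_mat (2^n) (2^n)" and adjoint: "mat_adjoint P = P" and idem: "P * P = P"
    using P unfolding nonneg_projector_def by auto
  note entries = nonneg_projector_entries[OF P]
  show "0 \<le> ?p i j" for i j
    using P unfolding nonneg_projector_def nonneg_entry_def Re_entries_def by auto
  show "?p i j = ?p j i" for i j
  proof (cases "i < 2^n \<and> j < 2^n")
    case True
    have "P $$ (i,j) = cnj (P $$ (j,i))"
      using True carrier by (subst adjoint[symmetric]) (simp add: mat_adjoint_def mat_of_rows_index)
    then show ?thesis using True entries by simp
  qed (auto simp: Re_entries_def)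
  show "?p i j = (\<Sum>k<2^n. ?p i k * ?p k j)" for i j
  proof (cases "i < 2^n \<and> j < 2^n")
    case True
    have "P $$ (i,j) = (\<Sum>k<2^n. P $$ (i,k) * P $$ (k,j))"
      using True carrier by (subst idem[symmetric]) (simp add: scalar_prod_def lessThan_atLeast0)
    then have "complex_of_real (?p i j) = complex_of_real (\<Sum>k<2^n. ?p i k * ?p k j)"
      using True entries by simp
    then show ?thesis by (simp only: of_real_eq_iff)
  qed (auto simp: Re_entries_def)
  show "2^n \<le> i \<Longrightarrow> ?p i j = 0" for i j by (simp add: Re_entries_def)
qed

theorem lemma4p2:
  fixes n q :: nat and P :: "complex mat"
  assumes "nonneg_projector n P"
    and "vec_space.rank (2^n) P = q"
  shows "\<exists>\<psi> :: nat \<Rightarrow> complex vec.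
           (\<forall>a<q. nonneg_state n (\<psi> a))
         \<and> (\<forall>a<q. \<forall>b<q. braket (\<psi> a) (\<psi> b) = (if a = b then 1 else 0))
         \<and> P = sum_ketbra n q \<psi>"
proof -
  interpret nonneg_projection "Re_entries (2^n) P" "2^n"
    using assms(1) by (rule nonneg_projection_Re_entries)
  have carrier: "P \<in> carrier_mat (2^n) (2^n)"
    using assms(1) unfolding nonneg_projector_def by simp
  note entries = nonneg_projector_entries[OF assms(1)]
  have q: "q = card reps"
    using rank_eq_card_reps[OF carrier] entries assms(2) by simp
  obtain \<psi> where
    states: "\<forall>a<q. \<psi> a \<in> carrier_vec (2^n) \<and> (\<forall>i<2^n. nonneg_entry (\<psi> a $ i))" and
    orthonormal: "\<forall>a<q. \<forall>b<q. braket (\<psi> a) (\<psi> b) = (if a = b then 1 else 0)" and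
    sum: "\<forall>i<2^n. \<forall>j<2^n. (\<Sum>a<q. ketbra (\<psi> a) $$ (i,j)) = complex_of_real (Re_entries (2^n) P i j)"
    using orthonormal_decomposition unfolding q by blast
  have "P = sum_ketbra n q \<psi>"
    using carrier sum entries by (intro eq_matI) (auto simp: sum_ketbra_def)
  then show ?thesis
    using states orthonormal unfolding nonneg_state_def by auto
qed

end
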